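(* Let $\mathbb K=\mathbb U(2)\oplus\mathbb U(2)$, $\mathbf v=(1,0,0,0)\in\mathbb K$, let $\gamma\in A_{\mathbb K}\setminus\{0\}$ be odd, let $d_1\in\mathbb K^\vee$ with $\bar d_1=\gamma$, let $d_2\in\mathbb E_8(2)^\vee$ with $q_{\mathbb E_8(2)}(\bar d_2)=q_{\mathbb K}(\gamma)$ (so $\bar d_2\ne0$), and put $\Lambda_\gamma=\mathbb Z(d_1,d_2)+\mathbb K\oplus\mathbb E_8(2)$. Regard $\mathbf v$ as a primitive isotropic vector of $\Lambda_\gamma$. (1) If $\gamma\equiv(\frac12,\frac12,\frac12,0),(\frac12,\frac12,0,0),(\frac12,\frac12,0,\frac12),(0,\frac12,\frac12,\frac12)\bmod\mathbb K$, then $\mathbf v$ has level $1$ in $\Lambda_\gamma$. (2) If $\gamma\equiv(0,0,\frac12,\frac12),(\frac12,0,\frac12,\frac12)\bmod\mathbb K$, then $\mathbf v$ has level $2$ in $\Lambda_\gamma$.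
   Context: $\mathbb U(2)$ is the lattice $\mathbb Z^2$ with Gram matrix $\binom{0\,2}{2\,0}$; vectors of $\mathbb K\otimes\mathbb Q$ are written as $(a,b,c,e)$ in the basis given by the two standard bases, so $\mathbb K^\vee=(\frac12\mathbb Z)^4$. $\mathbb E_8$ is the negative-definite $E_8$ lattice and $\mathbb E_8(2)$ has form doubled. $A_L=L^\vee/L$ with discriminant quadratic form $q_L$ (valued in $\mathbb Z/2$ here); $\gamma$ is odd if $q_{\mathbb K}(\gamma)=1$. The level of a primitive isotropic $\mathbf v\in L$ is the positive integer $\ell$ with $\langle\mathbf v,L\rangle=\ell\mathbb Z$. *)

theory Defs
  imports Complex_Main
begin

(* K \<otimes> Q uses coordinates 0..3 (basis e,f of the first U(2), then of the second U(2));
   E8 \<otimes> Q uses coordinates 0..7. *)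

definition K_space :: "(nat \<Rightarrow> rat) set" where
  "K_space = {x. \<forall>i\<ge>4. x i = 0}"

definition E8_space :: "(nat \<Rightarrow> rat) set" where
  "E8_space = {x. \<forall>i\<ge>8. x i = 0}"

(* Gram matrix of U(2) is [[0,2],[2,0]]; K = U(2) \<oplus> U(2) *)
definition bil_K :: "(nat \<Rightarrow> rat) \<Rightarrow> (nat \<Rightarrow> rat) \<Rightarrow> rat" where
  "bil_K x y = 2 * (x 0 * y 1 + x 1 * y 0) + 2 * (x 2 * y 3 + x 3 * y 2)"

definition K_lat :: "(nat \<Rightarrow> rat) set" where
  "K_lat = {x \<in> K_space. \<forall>i<4. x i \<in> \<int>}"

(* the E8 lattice (standard even unimodular model), with the NEGATIVE definite form *)
definition E8_lat :: "(nat \<Rightarrow> rat) set" where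
  "E8_lat = {x \<in> E8_space.
     ((\<forall>i<8. x i \<in> \<int>) \<or> (\<forall>i<8. x i - 1/2 \<in> \<int>)) \<and> (\<Sum>i<8. x i) / 2 \<in> \<int>}"

definition bil_E8 :: "(nat \<Rightarrow> rat) \<Rightarrow> (nat \<Rightarrow> rat) \<Rightarrow> rat" where
  "bil_E8 x y = - (\<Sum>i<8. x i * y i)"

(* E8(2): same underlying group, form doubled *)
definition bil_E8_2 :: "(nat \<Rightarrow> rat) \<Rightarrow> (nat \<Rightarrow> rat) \<Rightarrow> rat" where
  "bil_E8_2 x y = 2 * bil_E8 x y"

definition dual :: "('a \<Rightarrow> 'a \<Rightarrow> rat) \<Rightarrow> 'a set \<Rightarrow> 'a set \<Rightarrow> 'a set" where
  "dual B L V = {x \<in> V. \<forall>y\<in>L. B x y \<in> \<int>}"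

(* equality of values of discriminant quadratic forms (valued in Q/2Z, here Z/2) *)
definition mod2eq :: "rat \<Rightarrow> rat \<Rightarrow> bool" where
  "mod2eq a b \<longleftrightarrow> (a - b) / 2 \<in> \<int>"

definition vec4 :: "rat \<Rightarrow> rat \<Rightarrow> rat \<Rightarrow> rat \<Rightarrow> nat \<Rightarrow> rat" where
  "vec4 a b c e = (\<lambda>i. if i = 0 then a else if i = 1 then b else if i = 2 then c
                        else if i = 3 then e else 0)"

definition bil_KE :: "(nat \<Rightarrow> rat) \<times> (nat \<Rightarrow> rat) \<Rightarrow> (nat \<Rightarrow> rat) \<times> (nat \<Rightarrow> rat) \<Rightarrow> rat" where
  "bil_KE x y = bil_K (fst x) (fst y) + bil_E8_2 (snd x) (snd y)"

definition Lambda :: "(nat \<Rightarrow> rat) \<Rightarrow> (nat \<Rightarrow> rat) \<Rightarrow> ((nat \<Rightarrow> rat) \<times> (nat \<Rightarrow> rat)) set" where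
  "Lambda d1 d2 = {((\<lambda>i. of_int m * d1 i + k i), (\<lambda>i. of_int m * d2 i + e i)) | m k e.
                      k \<in> K_lat \<and> e \<in> E8_lat}"

definition level :: "('a \<Rightarrow> 'a \<Rightarrow> rat) \<Rightarrow> 'a set \<Rightarrow> 'a \<Rightarrow> nat" where
  "level B L v = (THE l::nat. 0 < l \<and> (\<lambda>y. B v y) ` L = (\<lambda>k::int. of_int (int l * k)) ` UNIV)"

definition v_iso :: "(nat \<Rightarrow> rat) \<times> (nat \<Rightarrow> rat)" where
  "v_iso = (vec4 1 0 0 0, (\<lambda>_. 0))"

end

theory Submission
  imports Defs
begin

text \<open>Pairing with \<open>v = (1,0,0,0)\<close> reads off twice the second coordinate of the
  \<open>\<bbbK>\<close>-component, so \<open>\<langle>v, \<Lambda>\<^sub>\<gamma>\<rangle> = 2(\<int> a + \<int>)\<close> with \<open>a\<close> the second coordinate of \<open>d\<^sub>1\<close>.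
  This group is \<open>\<int>\<close> if \<open>a \<in> 1/2 + \<int>\<close> and \<open>2\<int>\<close> if \<open>a \<in> \<int>\<close>, and the class of \<open>\<gamma>\<close> modulo
  \<open>\<bbbK>\<close> decides which case occurs.\<close>

lemma level_eqI:
  assumes "0 < l" and "(\<lambda>y. B v y) ` L = range (\<lambda>k::int. of_int (int l * k))"
  shows "level B L v = l"
  unfolding level_def
proof (rule the_equality)
  show "0 < l \<and> (\<lambda>y. B v y) ` L = range (\<lambda>k::int. of_int (int l * k))"
    using assms by blast
next
  have dvd: "int a dvd int b"
    if "range (\<lambda>k::int. of_int (int a * k) :: rat) = range (\<lambda>k::int. of_int (int b * k))"
    for a b :: nat
  proof -
    have "(of_int (int b * 1) :: rat) \<in> range (\<lambda>k::int. of_int (int a * k))"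
      using that by blast
    then obtain k where "(of_int (int b) :: rat) = of_int (int a * k)"
      by auto
    then have "int b = int a * k"
      by (simp only: of_int_eq_iff)
    then show ?thesis
      by simp
  qed
  fix l' assume "0 < l' \<and> (\<lambda>y. B v y) ` L = range (\<lambda>k::int. of_int (int l' * k))"
  then have "range (\<lambda>k::int. of_int (int l' * k) :: rat) = range (\<lambda>k::int. of_int (int l * k))"
    using assms(2) by simp
  from dvd[OF this] dvd[OF this[symmetric]] show "l' = l"
    by (simp add: dvd_antisym)
qed

lemma bil_KE_v_iso: "bil_KE v_iso y = 2 * fst y 1"
  by (simp add: bil_KE_def v_iso_def bil_K_def vec4_def bil_E8_2_def bil_E8_def)

lemma pairings_v_iso_Lambda:
  "(\<lambda>y. bil_KE v_iso y) ` Lambda d1 d2 = {2 * (of_int m * d1 1 + of_int j) |m j. True}"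
proof (intro equalityI subsetI)
  fix x assume "x \<in> (\<lambda>y. bil_KE v_iso y) ` Lambda d1 d2"
  then obtain m k e where k: "k \<in> K_lat"
    and x: "x = bil_KE v_iso ((\<lambda>i. of_int m * d1 i + k i), (\<lambda>i. of_int m * d2 i + e i))"
    unfolding Lambda_def by blast
  from k have "k 1 \<in> \<int>"
    unfolding K_lat_def by simp
  then obtain j where "k 1 = of_int j"
    by (rule Ints_cases)
  with x show "x \<in> {2 * (of_int m * d1 1 + of_int j) |m j. True}"
    by (auto simp: bil_KE_v_iso)
next
  fix x assume "x \<in> {2 * (of_int m * d1 1 + of_int j) |m j. True}"
  then obtain m j where x: "x = 2 * (of_int m * d1 1 + of_int j)"
    by blast
  define k :: "nat \<Rightarrow> rat" where "k = (\<lambda>i. if i = 1 then of_int j else 0)"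
  have "k \<in> K_lat" and "(\<lambda>_. 0) \<in> E8_lat"
    by (auto simp: K_lat_def K_space_def E8_lat_def E8_space_def k_def)
  then have "((\<lambda>i. of_int m * d1 i + k i), (\<lambda>i. of_int m * d2 i + 0)) \<in> Lambda d1 d2"
    unfolding Lambda_def by (intro CollectI exI[of _ m] exI[of _ k] exI[of _ "\<lambda>_. 0"]) simp
  moreover have "x = bil_KE v_iso ((\<lambda>i. of_int m * d1 i + k i), (\<lambda>i. of_int m * d2 i + 0))"
    by (simp add: bil_KE_v_iso x k_def)
  ultimately show "x \<in> (\<lambda>y. bil_KE v_iso y) ` Lambda d1 d2"
    by blast
qed

lemma doubled_span_half_integral:
  fixes a :: rat
  assumes "a - 1/2 \<in> \<int>"
  shows "{2 * (of_int m * a + of_int j) |m j. True} = range of_int"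
proof -
  from assms obtain z where z: "a = 1/2 + of_int z"
    by (auto elim!: Ints_cases simp: algebra_simps)
  show ?thesis
  proof (intro equalityI subsetI)
    fix x assume "x \<in> {2 * (of_int m * a + of_int j) |m j. True}"
    then obtain m j where x: "x = 2 * (of_int m * a + of_int j)"
      by blast
    have "x = of_int (m + 2 * m * z + 2 * j)"
      unfolding x z by (simp add: algebra_simps)
    then show "x \<in> range of_int"
      by blast
  next
    fix x :: rat assume "x \<in> range of_int"
    then obtain n where x: "x = of_int n"
      by blast
    have "x = 2 * (of_int n * a + of_int (- n * z))"
      unfolding x z by (simp add: algebra_simps)
    then show "x \<in> {2 * (of_int m * a + of_int j) |m j. True}"
      by blast
  qed
qed

lemma doubled_span_integral:
  fixes a :: rat
  assumes "a \<in> \<int>"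
  shows "{2 * (of_int m * a + of_int j) |m j. True} = range (\<lambda>k::int. of_int (2 * k))"
proof (intro equalityI subsetI)
  fix x assume "x \<in> {2 * (of_int m * a + of_int j) |m j. True}"
  then obtain m j where x: "x = 2 * (of_int m * a + of_int j)"
    by blast
  from assms obtain z where z: "a = of_int z"
    by (rule Ints_cases)
  have "x = of_int (2 * (m * z + j))"
    unfolding x z by simp
  then show "x \<in> range (\<lambda>k::int. of_int (2 * k))"
    by blast
next
  fix x :: rat assume "x \<in> range (\<lambda>k::int. of_int (2 * k))"
  then obtain n where "x = 2 * (of_int 0 * a + of_int n)"
    by auto
  then show "x \<in> {2 * (of_int m * a + of_int j) |m j. True}"
    by blast
qed

lemma level_v_iso_Lambda_half_integral:
  assumes "d1 1 - 1/2 \<in> \<int>"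
  shows "level bil_KE (Lambda d1 d2) v_iso = 1"
proof (rule level_eqI)
  show "(\<lambda>y. bil_KE v_iso y) ` Lambda d1 d2 = range (\<lambda>k::int. of_int (int 1 * k))"
    unfolding pairings_v_iso_Lambda doubled_span_half_integral[OF assms] by simp
qed simp

lemma level_v_iso_Lambda_integral:
  assumes "d1 1 \<in> \<int>"
  shows "level bil_KE (Lambda d1 d2) v_iso = 2"
proof (rule level_eqI)
  show "(\<lambda>y. bil_KE v_iso y) ` Lambda d1 d2 = range (\<lambda>k::int. of_int (int 2 * k))"
    unfolding pairings_v_iso_Lambda doubled_span_integral[OF assms] by simp
qed simp

lemma K_lat_coset_vec4_coord1:
  assumes "(\<lambda>i. d i - vec4 a b c e i) \<in> K_lat"
  shows "d 1 - b \<in> \<int>"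
proof -
  have "d 1 - vec4 a b c e 1 \<in> \<int>"
    using assms unfolding K_lat_def by simp
  then show ?thesis
    by (simp add: vec4_def)
qed

theorem lemma6p3:
  fixes d1 d2 :: "nat \<Rightarrow> rat"
  assumes d1_dual: "d1 \<in> dual bil_K K_lat K_space"
    and gamma_nonzero: "d1 \<notin> K_lat"
    and gamma_odd: "mod2eq (bil_K d1 d1) 1"
    and d2_dual: "d2 \<in> dual bil_E8_2 E8_lat E8_space"
    and q_match: "mod2eq (bil_E8_2 d2 d2) (bil_K d1 d1)"
  shows
    "((\<lambda>i. d1 i - vec4 (1/2) (1/2) (1/2) 0 i) \<in> K_lat \<or>
      (\<lambda>i. d1 i - vec4 (1/2) (1/2) 0 0 i) \<in> K_lat \<or>
      (\<lambda>i. d1 i - vec4 (1/2) (1/2) 0 (1/2) i) \<in> K_lat \<or>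
      (\<lambda>i. d1 i - vec4 0 (1/2) (1/2) (1/2) i) \<in> K_lat
      \<longrightarrow> level bil_KE (Lambda d1 d2) v_iso = 1)
   \<and> ((\<lambda>i. d1 i - vec4 0 0 (1/2) (1/2) i) \<in> K_lat \<or>
      (\<lambda>i. d1 i - vec4 (1/2) 0 (1/2) (1/2) i) \<in> K_lat
      \<longrightarrow> level bil_KE (Lambda d1 d2) v_iso = 2)"
proof (intro conjI impI)
  assume "(\<lambda>i. d1 i - vec4 (1/2) (1/2) (1/2) 0 i) \<in> K_lat \<or>
      (\<lambda>i. d1 i - vec4 (1/2) (1/2) 0 0 i) \<in> K_lat \<or>
      (\<lambda>i. d1 i - vec4 (1/2) (1/2) 0 (1/2) i) \<in> K_lat \<or>
      (\<lambda>i. d1 i - vec4 0 (1/2) (1/2) (1/2) i) \<in> K_lat"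
  then have "d1 1 - 1/2 \<in> \<int>"
    by (auto dest: K_lat_coset_vec4_coord1)
  then show "level bil_KE (Lambda d1 d2) v_iso = 1"
    by (rule level_v_iso_Lambda_half_integral)
next
  assume "(\<lambda>i. d1 i - vec4 0 0 (1/2) (1/2) i) \<in> K_lat \<or>
      (\<lambda>i. d1 i - vec4 (1/2) 0 (1/2) (1/2) i) \<in> K_lat"
  then have "d1 1 \<in> \<int>"
    by (auto dest: K_lat_coset_vec4_coord1)
  then show "level bil_KE (Lambda d1 d2) v_iso = 2"
    by (rule level_v_iso_Lambda_integral)
qed

end
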